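(* Let $\pi$ be a set of primes and $G$ a group. Let $A$ be a $\mathbb ZG$-module whose additive group is divisible, and let $B$ be a finite $\mathbb ZG$-submodule of $A$. Suppose there is a $\mathbb ZG$-module epimorphism $\theta:U\to A/B$, where $U$ is a $\mathbb ZG$-module whose additive group is torsion-free of finite rank and $\pi$-spectral. Then $A$ is a $\mathbb ZG$-module quotient of some $\mathbb ZG$-module whose additive group is torsion-free of finite rank and $\pi$-spectral.
   Context: An abelian group has finite rank if its torsion-free rank and all $p$-ranks are finite; it is $\pi$-spectral if every prime $p$ for which it has a section isomorphic to $\mathbb Z_{p^\infty}$ lies in $\pi$. *)

theory Defs
  imports "HOL-Algebra.Algebra"
begin

text \<open>Abelian groups are HOL-Algebra commutative groups (written multiplicatively:
  the group operation of the record plays the role of addition).\<close>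

definition ZG_module :: "('g, 'x) monoid_scheme \<Rightarrow> ('m, 'y) monoid_scheme \<Rightarrow> ('g \<Rightarrow> 'm \<Rightarrow> 'm) \<Rightarrow> bool" where
  "ZG_module G M act \<longleftrightarrow> group G \<and> comm_group M \<and>
     (\<forall>g\<in>carrier G. act g \<in> hom M M) \<and>
     (\<forall>x\<in>carrier M. act \<one>\<^bsub>G\<^esub> x = x) \<and>
     (\<forall>g\<in>carrier G. \<forall>h\<in>carrier G. \<forall>x\<in>carrier M.
        act (g \<otimes>\<^bsub>G\<^esub> h) x = act g (act h x))"

definition ZG_submodule :: "('g, 'x) monoid_scheme \<Rightarrow> 'm set \<Rightarrow> ('m, 'y) monoid_scheme \<Rightarrow> ('g \<Rightarrow> 'm \<Rightarrow> 'm) \<Rightarrow> bool" where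
  "ZG_submodule G B M act \<longleftrightarrow> subgroup B M \<and> (\<forall>g\<in>carrier G. \<forall>b\<in>B. act g b \<in> B)"

definition ZG_hom :: "('g, 'x) monoid_scheme \<Rightarrow> ('m, 'y) monoid_scheme \<Rightarrow> ('g \<Rightarrow> 'm \<Rightarrow> 'm)
    \<Rightarrow> ('n, 'z) monoid_scheme \<Rightarrow> ('g \<Rightarrow> 'n \<Rightarrow> 'n) \<Rightarrow> ('m \<Rightarrow> 'n) \<Rightarrow> bool" where
  "ZG_hom G M actM N actN f \<longleftrightarrow> f \<in> hom M N \<and>
     (\<forall>g\<in>carrier G. \<forall>x\<in>carrier M. f (actM g x) = actN g (f x))"

definition ZG_epi :: "('g, 'x) monoid_scheme \<Rightarrow> ('m, 'y) monoid_scheme \<Rightarrow> ('g \<Rightarrow> 'm \<Rightarrow> 'm)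
    \<Rightarrow> ('n, 'z) monoid_scheme \<Rightarrow> ('g \<Rightarrow> 'n \<Rightarrow> 'n) \<Rightarrow> ('m \<Rightarrow> 'n) \<Rightarrow> bool" where
  "ZG_epi G M actM N actN f \<longleftrightarrow> ZG_hom G M actM N actN f \<and> f ` carrier M = carrier N"

text \<open>The induced action on the quotient module M/B (carrier: cosets of B):
  g acts on the coset B a by taking its image under the action of g,
  which is the coset B (g a) since B is a ZG-submodule.\<close>

definition quot_act :: "('g \<Rightarrow> 'm \<Rightarrow> 'm) \<Rightarrow> 'g \<Rightarrow> 'm set \<Rightarrow> 'm set" where
  "quot_act act g C = act g ` C"

definition divisible_group :: "('m, 'y) monoid_scheme \<Rightarrow> bool" where
  "divisible_group M \<longleftrightarrow>
     (\<forall>x\<in>carrier M. \<forall>n::nat. n > 0 \<longrightarrow> (\<exists>y\<in>carrier M. y [^]\<^bsub>M\<^esub> n = x))"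

definition torsion_free :: "('m, 'y) monoid_scheme \<Rightarrow> bool" where
  "torsion_free M \<longleftrightarrow>
     (\<forall>x\<in>carrier M. \<forall>n::nat. n > 0 \<longrightarrow> x [^]\<^bsub>M\<^esub> n = \<one>\<^bsub>M\<^esub> \<longrightarrow> x = \<one>\<^bsub>M\<^esub>)"

definition lin_indep :: "('m, 'y) monoid_scheme \<Rightarrow> 'm set \<Rightarrow> bool" where
  "lin_indep M S \<longleftrightarrow> finite S \<and> S \<subseteq> carrier M \<and>
     (\<forall>c::'m \<Rightarrow> int. finprod M (\<lambda>s. s [^]\<^bsub>M\<^esub> c s) S = \<one>\<^bsub>M\<^esub> \<longrightarrow> (\<forall>s\<in>S. c s = 0))"

definition finite_torsion_free_rank :: "('m, 'y) monoid_scheme \<Rightarrow> bool" where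
  "finite_torsion_free_rank M \<longleftrightarrow> (\<exists>N::nat. \<forall>S. lin_indep M S \<longrightarrow> card S \<le> N)"

text \<open>The p-rank is the F_p-dimension of M[p] = {x. x^p = 1}; it is finite iff M[p] is finite.\<close>

definition finite_p_rank :: "('m, 'y) monoid_scheme \<Rightarrow> nat \<Rightarrow> bool" where
  "finite_p_rank M p \<longleftrightarrow> finite {x\<in>carrier M. x [^]\<^bsub>M\<^esub> p = \<one>\<^bsub>M\<^esub>}"

definition finite_rank :: "('m, 'y) monoid_scheme \<Rightarrow> bool" where
  "finite_rank M \<longleftrightarrow> finite_torsion_free_rank M \<and> (\<forall>p. Factorial_Ring.prime p \<longrightarrow> finite_p_rank M p)"

text \<open>The Pruefer p-group Z_{p^infinity}, realised as the rationals in [0,1) with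
  p-power denominator, under addition modulo 1.\<close>

definition Pruefer :: "nat \<Rightarrow> rat monoid" where
  "Pruefer p = \<lparr>carrier = {q::rat. 0 \<le> q \<and> q < 1 \<and> (\<exists>k::nat. q * of_nat p ^ k \<in> \<int>)},
               monoid.mult = (\<lambda>x y. frac (x + y)), one = 0\<rparr>"

definition has_Pruefer_section :: "('m, 'y) monoid_scheme \<Rightarrow> nat \<Rightarrow> bool" where
  "has_Pruefer_section M p \<longleftrightarrow>
     (\<exists>H K. subgroup H M \<and> subgroup K (M\<lparr>carrier := H\<rparr>) \<and>
            ((M\<lparr>carrier := H\<rparr>) Mod K) \<cong> Pruefer p)"

definition pi_spectral :: "nat set \<Rightarrow> ('m, 'y) monoid_scheme \<Rightarrow> bool" where
  "pi_spectral \<pi> M \<longleftrightarrow> (\<forall>p. Factorial_Ring.prime p \<and> has_Pruefer_section M p \<longrightarrow> p \<in> \<pi>)"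

end

theory Submission
  imports Defs
begin

text \<open>Let m be the order of the finite submodule B.  Raising to the
  m-th power kills B, so on the quotient A/B the map  B a \<mapsto> a^m  is well defined;
  it is a ZG-homomorphism A/B \<rightarrow> A (A is abelian and G acts by endomorphisms), and it
  is onto because A is divisible.  Composing it with the given epimorphism
  \<theta> : U \<rightarrow> A/B exhibits A as a ZG-quotient of U itself, so V = U works.\<close>

lemma ZG_epi_comp:
  assumes "ZG_epi G M actM N actN f" and "ZG_epi G N actN P actP h"
  shows "ZG_epi G M actM P actP (h \<circ> f)"
proof -
  have f: "f \<in> hom M N" "\<And>g x. g \<in> carrier G \<Longrightarrow> x \<in> carrier M \<Longrightarrow> f (actM g x) = actN g (f x)"
    "f ` carrier M = carrier N"
    using assms(1) unfolding ZG_epi_def ZG_hom_def by blast+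
  have h: "h \<in> hom N P" "\<And>g y. g \<in> carrier G \<Longrightarrow> y \<in> carrier N \<Longrightarrow> h (actN g y) = actP g (h y)"
    "h ` carrier N = carrier P"
    using assms(2) unfolding ZG_epi_def ZG_hom_def by blast+
  have "h \<circ> f \<in> hom M P" using hom_compose f(1) h(1) .
  moreover have "(h \<circ> f) (actM g x) = actP g ((h \<circ> f) x)" if "g \<in> carrier G" "x \<in> carrier M" for g x
    using that f(2) h(2) hom_in_carrier[OF f(1)] by simp
  moreover have "(h \<circ> f) ` carrier M = carrier P" using f(3) h(3) by (metis image_comp)
  ultimately show ?thesis unfolding ZG_epi_def ZG_hom_def by blast
qed

text \<open>Lagrange: the order of a finite subgroup annihilates each of its elements.\<close>

lemma pow_card_subgroup:
  assumes "group A" "subgroup B A" "finite B" "b \<in> B"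
  shows "b [^]\<^bsub>A\<^esub> card B = \<one>\<^bsub>A\<^esub>"
proof -
  have "group (A\<lparr>carrier := B\<rparr>)" using subgroup.subgroup_is_group[OF assms(2,1)] .
  then have "b [^]\<^bsub>A\<lparr>carrier := B\<rparr>\<^esub> card B = \<one>\<^bsub>A\<^esub>"
    using group.pow_order_eq_1 assms(4) by (fastforce simp: order_def)
  then show ?thesis
    using monoid.nat_pow_consistent[OF group.is_monoid[OF assms(1)], of b "card B" B] by simp
qed

lemma pow_card_rcos:
  assumes "comm_group A" "subgroup B A" "finite B" "a \<in> carrier A" "x \<in> B #>\<^bsub>A\<^esub> a"
  shows "x [^]\<^bsub>A\<^esub> card B = a [^]\<^bsub>A\<^esub> card B"
proof -
  interpret comm_group A by (fact assms(1))
  obtain b where b: "b \<in> B" "x = b \<otimes>\<^bsub>A\<^esub> a" using assms(5) by (auto simp: r_coset_def)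
  have "b \<in> carrier A" using b(1) subgroup.subset[OF assms(2)] by blast
  then have "x [^]\<^bsub>A\<^esub> card B = b [^]\<^bsub>A\<^esub> card B \<otimes>\<^bsub>A\<^esub> a [^]\<^bsub>A\<^esub> card B"
    using b(2) assms(4) by (simp add: nat_pow_distrib)
  then show ?thesis using pow_card_subgroup[OF is_group assms(2,3) b(1)] assms(4) by simp
qed

definition coset_power :: "('a, 'b) monoid_scheme \<Rightarrow> 'a set \<Rightarrow> 'a set \<Rightarrow> 'a" where
  "coset_power A B C = (SOME x. x \<in> C) [^]\<^bsub>A\<^esub> card B"

lemma coset_power_rcos:
  assumes "comm_group A" "subgroup B A" "finite B" "a \<in> carrier A"
  shows "coset_power A B (B #>\<^bsub>A\<^esub> a) = a [^]\<^bsub>A\<^esub> card B"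
proof -
  have "a \<in> B #>\<^bsub>A\<^esub> a"
    using group.rcos_self[OF comm_group.axioms(2)[OF assms(1)] assms(4,2)] .
  then have "(SOME x. x \<in> B #>\<^bsub>A\<^esub> a) \<in> B #>\<^bsub>A\<^esub> a" by (rule someI)
  then show ?thesis unfolding coset_power_def using pow_card_rcos[OF assms] by blast
qed

lemma coset_power_hom:
  assumes "comm_group A" "subgroup B A" "finite B"
  shows "coset_power A B \<in> hom (A Mod B) A"
proof (rule homI)
  interpret comm_group A by (fact assms(1))
  have normal: "B \<lhd> A" using subgroup_imp_normal[OF assms(2)] .
  fix C D assume "C \<in> carrier (A Mod B)" "D \<in> carrier (A Mod B)"
  then obtain a b where ab: "a \<in> carrier A" "C = B #>\<^bsub>A\<^esub> a" "b \<in> carrier A" "D = B #>\<^bsub>A\<^esub> b"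
    by (auto simp: FactGroup_def RCOSETS_def)
  then have "C \<otimes>\<^bsub>A Mod B\<^esub> D = B #>\<^bsub>A\<^esub> (a \<otimes>\<^bsub>A\<^esub> b)"
    using normal.rcos_sum[OF normal] by (simp add: FactGroup_def)
  then show "coset_power A B (C \<otimes>\<^bsub>A Mod B\<^esub> D) = coset_power A B C \<otimes>\<^bsub>A\<^esub> coset_power A B D"
    using ab coset_power_rcos[OF assms] by (simp add: nat_pow_distrib)
next
  fix C assume "C \<in> carrier (A Mod B)"
  then obtain a where "a \<in> carrier A" "C = B #>\<^bsub>A\<^esub> a" by (auto simp: FactGroup_def RCOSETS_def)
  then show "coset_power A B C \<in> carrier A"
    using coset_power_rcos[OF assms] comm_group.axioms(2)[OF assms(1)]
    by (simp add: group.is_monoid monoid.nat_pow_closed)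
qed

text \<open>The induced action on A/B is well defined: g maps the coset B a onto the coset
  B (g a).  Surjectivity onto B (g a) uses that g acts invertibly, with inverse g\<inverse>.\<close>

lemma quot_act_rcos:
  assumes "ZG_module G A act" "ZG_submodule G B A act"
    and "g \<in> carrier G" "a \<in> carrier A"
  shows "quot_act act g (B #>\<^bsub>A\<^esub> a) = B #>\<^bsub>A\<^esub> act g a"
proof -
  have G: "group G" and hom_g: "act g \<in> hom A A" and B: "subgroup B A"
    and B_closed: "\<And>h b. h \<in> carrier G \<Longrightarrow> b \<in> B \<Longrightarrow> act h b \<in> B"
    using assms(1,2,3) unfolding ZG_module_def ZG_submodule_def by blast+
  have B_carrier: "b \<in> B \<Longrightarrow> b \<in> carrier A" for b using subgroup.subset[OF B] by blast
  have act_mult: "act g (b \<otimes>\<^bsub>A\<^esub> a) = act g b \<otimes>\<^bsub>A\<^esub> act g a" if "b \<in> B" for b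
    using hom_mult[OF hom_g] B_carrier[OF that] assms(4) by blast
  have undo: "act g (act (inv\<^bsub>G\<^esub> g) b) = b" if "b \<in> B" for b
  proof -
    have "act g (act (inv\<^bsub>G\<^esub> g) b) = act (g \<otimes>\<^bsub>G\<^esub> inv\<^bsub>G\<^esub> g) b"
      using assms(1,3) B_carrier[OF that] G unfolding ZG_module_def by simp
    also have "\<dots> = b"
      using assms(1,3) B_carrier[OF that] group.r_inv[OF G] unfolding ZG_module_def by simp
    finally show ?thesis .
  qed
  show ?thesis
  proof
    show "quot_act act g (B #>\<^bsub>A\<^esub> a) \<subseteq> B #>\<^bsub>A\<^esub> act g a"
      using act_mult B_closed[OF assms(3)] by (auto simp: quot_act_def r_coset_def)
  next
    show "B #>\<^bsub>A\<^esub> act g a \<subseteq> quot_act act g (B #>\<^bsub>A\<^esub> a)"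
    proof
      fix x assume "x \<in> B #>\<^bsub>A\<^esub> act g a"
      then obtain b where b: "b \<in> B" "x = b \<otimes>\<^bsub>A\<^esub> act g a" by (auto simp: r_coset_def)
      let ?b' = "act (inv\<^bsub>G\<^esub> g) b"
      have "?b' \<in> B" using B_closed b(1) G assms(3) by simp
      moreover have "x = act g (?b' \<otimes>\<^bsub>A\<^esub> a)" using act_mult[OF \<open>?b' \<in> B\<close>] undo[OF b(1)] b(2) by simp
      ultimately show "x \<in> quot_act act g (B #>\<^bsub>A\<^esub> a)" by (auto simp: quot_act_def r_coset_def)
    qed
  qed
qed

lemma coset_power_act:
  assumes "ZG_module G A act" "ZG_submodule G B A act" "finite B"
    and "g \<in> carrier G" "C \<in> carrier (A Mod B)"
  shows "coset_power A B (quot_act act g C) = act g (coset_power A B C)"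
proof -
  have A: "comm_group A" and hom_g: "act g \<in> hom A A" and B: "subgroup B A"
    using assms(1,2,4) unfolding ZG_module_def ZG_submodule_def by blast+
  obtain a where a: "a \<in> carrier A" "C = B #>\<^bsub>A\<^esub> a"
    using assms(5) by (auto simp: FactGroup_def RCOSETS_def)
  have ga: "act g a \<in> carrier A" using hom_in_carrier[OF hom_g a(1)] .
  have "coset_power A B (quot_act act g C) = act g a [^]\<^bsub>A\<^esub> card B"
    using quot_act_rcos[OF assms(1,2,4) a(1)] coset_power_rcos[OF A B assms(3) ga] a(2) by simp
  also have "\<dots> = act g (a [^]\<^bsub>A\<^esub> card B)"
    using hom_nat_pow[OF hom_g a(1)] comm_group.axioms(2)[OF A] by simp
  finally show ?thesis using coset_power_rcos[OF A B assms(3) a(1)] a(2) by simp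
qed

text \<open>In a divisible group every element is a |B|-th power, so the power map is onto.\<close>

lemma coset_power_surj:
  assumes "comm_group A" "subgroup B A" "finite B" "divisible_group A"
  shows "coset_power A B ` carrier (A Mod B) = carrier A"
proof
  show "coset_power A B ` carrier (A Mod B) \<subseteq> carrier A"
    using coset_power_hom[OF assms(1-3)] by (auto simp: hom_def)
next
  show "carrier A \<subseteq> coset_power A B ` carrier (A Mod B)"
  proof
    fix y assume y: "y \<in> carrier A"
    have "card B > 0" using assms(3) subgroup.one_closed[OF assms(2)] card_gt_0_iff by blast
    then obtain x where x: "x \<in> carrier A" "x [^]\<^bsub>A\<^esub> card B = y"
      using assms(4) y unfolding divisible_group_def by blast
    have "B #>\<^bsub>A\<^esub> x \<in> carrier (A Mod B)" using x(1) by (auto simp: FactGroup_def RCOSETS_def)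
    moreover have "coset_power A B (B #>\<^bsub>A\<^esub> x) = y" using coset_power_rcos[OF assms(1-3) x(1)] x(2) by simp
    ultimately show "y \<in> coset_power A B ` carrier (A Mod B)" by blast
  qed
qed

lemma coset_power_ZG_epi:
  assumes "ZG_module G A act" "ZG_submodule G B A act" "finite B" "divisible_group A"
  shows "ZG_epi G (A Mod B) (quot_act act) A act (coset_power A B)"
proof -
  have A: "comm_group A" and B: "subgroup B A"
    using assms(1,2) unfolding ZG_module_def ZG_submodule_def by blast+
  show ?thesis
    unfolding ZG_epi_def ZG_hom_def
    using coset_power_hom[OF A B assms(3)] coset_power_act[OF assms(1-3)]
      coset_power_surj[OF A B assms(3,4)] by blast
qed

text \<open>The witness module must be a plain monoid, while U may carry further record
  fields.  All notions used here only depend on carrier, multiplication and unit, so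
  they are unchanged by passing to monoid.truncate U.\<close>

lemma truncate_monoid_fields [simp]:
  "carrier (monoid.truncate M) = carrier M"
  "monoid.mult (monoid.truncate M) = monoid.mult M"
  "\<one>\<^bsub>monoid.truncate M\<^esub> = \<one>\<^bsub>M\<^esub>"
  by (simp_all add: monoid.truncate_def)

lemma truncate_nat_pow [simp]: "x [^]\<^bsub>monoid.truncate M\<^esub> (n::nat) = x [^]\<^bsub>M\<^esub> n"
  by (simp add: nat_pow_def)

lemma truncate_m_inv [simp]: "m_inv (monoid.truncate M) = m_inv M"
  by (simp add: m_inv_def fun_eq_iff)

lemma truncate_int_pow [simp]: "x [^]\<^bsub>monoid.truncate M\<^esub> (k::int) = x [^]\<^bsub>M\<^esub> k"
  by (simp only: int_pow_def2 truncate_m_inv truncate_nat_pow)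

lemma truncate_finprod [simp]: "finprod (monoid.truncate M) f S = finprod M f S"
  by (simp add: finprod_def)

lemma truncate_hom [simp]:
  "hom (monoid.truncate M) Y = hom M Y"
  "hom Y (monoid.truncate M) = hom Y M"
  by (simp_all add: hom_def)

lemma truncate_comm_group [simp]: "comm_group (monoid.truncate M) = comm_group M"
proof -
  have "Units (monoid.truncate M) = Units M" by (simp add: Units_def)
  moreover have "monoid (monoid.truncate M) = monoid M"
    unfolding monoid_def truncate_monoid_fields by (rule refl)
  ultimately show ?thesis
    unfolding comm_group_def comm_monoid_def comm_monoid_axioms_def group_def group_axioms_def
      truncate_monoid_fields by simp
qed

lemma truncate_sections [simp]:
  "subgroup H (monoid.truncate M) = subgroup H M"
  "(monoid.truncate M)\<lparr>carrier := H\<rparr> = monoid.truncate (M\<lparr>carrier := H\<rparr>)"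
  "monoid.truncate M Mod K = M Mod K"
proof -
  show "subgroup H (monoid.truncate M) = subgroup H M" by (simp add: subgroup_def)
  show "(monoid.truncate M)\<lparr>carrier := H\<rparr> = monoid.truncate (M\<lparr>carrier := H\<rparr>)"
    by (simp add: monoid.truncate_def)
  have "set_mult (monoid.truncate M) = set_mult M" by (simp add: set_mult_def fun_eq_iff)
  then show "monoid.truncate M Mod K = M Mod K" by (simp add: FactGroup_def RCOSETS_def r_coset_def)
qed

lemma ZG_module_truncate: "ZG_module G (monoid.truncate M) act = ZG_module G M act"
  by (simp add: ZG_module_def)

lemma ZG_epi_truncate: "ZG_epi G (monoid.truncate M) act N actN f = ZG_epi G M act N actN f"
  by (simp add: ZG_epi_def ZG_hom_def)

lemma torsion_free_truncate: "torsion_free (monoid.truncate M) = torsion_free M"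
  by (simp add: torsion_free_def)

lemma finite_rank_truncate: "finite_rank (monoid.truncate M) = finite_rank M"
  by (simp add: finite_rank_def finite_torsion_free_rank_def lin_indep_def finite_p_rank_def)

lemma pi_spectral_truncate: "pi_spectral \<pi> (monoid.truncate M) = pi_spectral \<pi> M"
  by (simp add: pi_spectral_def has_Pruefer_section_def)

theorem lemma4p5:
  fixes \<pi> :: "nat set"
    and G :: "('g, 'x) monoid_scheme"
    and A :: "('a, 'y) monoid_scheme" and actA :: "'g \<Rightarrow> 'a \<Rightarrow> 'a"
    and B :: "'a set"
    and U :: "('u, 'z) monoid_scheme" and actU :: "'g \<Rightarrow> 'u \<Rightarrow> 'u"
    and \<theta> :: "'u \<Rightarrow> 'a set"
  assumes "\<forall>p\<in>\<pi>. Factorial_Ring.prime p"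
    and "group G"
    and "ZG_module G A actA"
    and "divisible_group A"
    and "ZG_submodule G B A actA"
    and "finite B"
    and "ZG_module G U actU"
    and "torsion_free U" and "finite_rank U" and "pi_spectral \<pi> U"
    and "ZG_epi G U actU (A Mod B) (quot_act actA) \<theta>"
  shows "\<exists>(V :: 'u monoid) actV (\<phi> :: 'u \<Rightarrow> 'a).
           ZG_module G V actV \<and> torsion_free V \<and> finite_rank V \<and> pi_spectral \<pi> V \<and>
           ZG_epi G V actV A actA \<phi>"
proof -
  let ?V = "monoid.truncate U"
  have "ZG_epi G U actU A actA (coset_power A B \<circ> \<theta>)"
    using ZG_epi_comp[OF assms(11) coset_power_ZG_epi[OF assms(3,5,6,4)]] .
  then have "ZG_epi G ?V actU A actA (coset_power A B \<circ> \<theta>)"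
    by (simp only: ZG_epi_truncate)
  moreover have "ZG_module G ?V actU" using assms(7) by (simp only: ZG_module_truncate)
  moreover have "torsion_free ?V \<and> finite_rank ?V \<and> pi_spectral \<pi> ?V"
    using assms(8-10) by (simp only: torsion_free_truncate finite_rank_truncate pi_spectral_truncate)
  ultimately show ?thesis by blast
qed

end
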